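(* Let $\Lambda$ be a set with $1\leq|\Lambda|\leq\omega$. For every $\lambda\in\Lambda$ let $\mathbf{H}(\lambda)$ be a $\pi$-tree on a topological space $X_\lambda$ such that $\mathrm{cofin}\,\omega\gg\mathrm{Rise}_{\mathbf{H}(\lambda)}(X_\lambda)$. Let $Y$ be a topological space that has a $\pi$-tree. Then the Tychonoff product $Y\times\prod_{\lambda\in\Lambda}X_\lambda$ has a $\pi$-tree.
   Context: $\mathrm{cofin}\,\omega=\{\omega\setminus F: F\subseteq\omega\text{ finite}\}$. Neighbourhoods are not necessarily open. $\omega=\{0,1,2,\dots\}$, ${}^{<\omega}\omega$ is the set of finite sequences of natural numbers. A tree is a strict partial order in which the set of predecessors of every node is well-ordered; $\mathrm{height}(x)$ is the ordinal isomorphic to the set of predecessors of $x$; a branch is a maximal chain; $\mathrm{sons}(x)$ is the set of immediate successors of $x$; $0$ denotes the least node. A foliage tree is a pair $\mathbf{F}=(T,l)$ with $T$ a tree (skeleton) and $l$ a function on its nodes, $\mathbf{F}_x:=l(x)$; tree notions apply via the skeleton. $\mathrm{shoot}_{\mathbf{F}}(v)=\{\bigcup_{x\in C}\mathbf{F}_x: C\text{ a cofinite subset of }\mathrm{sons}_{\mathbf{F}}(v)\}$; $\mathrm{scope}_{\mathbf{F}}(p)=\{x:p\in\mathbf{F}_x\}$. For families $\gamma,\delta$ of sets, $\gamma\gg\delta$ means every nonempty $D\in\delta$ contains some nonempty $G\in\gamma$. $\mathrm{rise}_{\mathbf{F}}(p,U)=\{\mathrm{height}_{\mathbf{F}}(v):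 v\in\mathrm{scope}_{\mathbf{F}}(p),\ \mathrm{shoot}_{\mathbf{F}}(v)\gg\{U\}\}$; $\mathrm{Rise}_{\mathbf{F}}(X)=\{\mathrm{rise}_{\mathbf{F}}(p,U):p\in X,\ U\text{ a neighbourhood of }p\text{ in }X\}$. $\mathbf{F}$ is locally strict if each non-maximal leaf $\mathbf{F}_x$ is the disjoint union of $\mathbf{F}_s$, $s\in\mathrm{sons}(x)$; has strict branches if it has a node and for each branch $B$, $\bigcap_{x\in B}\mathbf{F}_x$ is a singleton; is open in $X$ if all leaves are open in $X$; is a foliage $\omega,\omega$-tree if its skeleton is order-isomorphic to $({}^{<\omega}\omega,\subsetneq)$. A Baire foliage tree on $X$ is an open in $X$, locally strict foliage $\omega,\omega$-tree with strict branches and $\mathbf{F}_{0_{\mathbf{F}}}=X$. $\mathbf{F}$ grows into $X$ if for every $p\in X$ and neighbourhood $U$ of $p$ there is $z\in\mathrm{scope}_{\mathbf{F}}(p)$ with $\mathrm{shoot}_{\mathbf{F}}(z)\gg\{U\}$. A $\pi$-tree on $X$ is a Baire foliage tree on $X$ that grows into $X$; a space has a $\pi$-tree if there is a $\pi$-tree on it. *)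

theory Defs
  imports "HOL-Analysis.Analysis"
begin

text \<open>A foliage omega,omega-tree is represented up to isomorphism of its skeleton
  by a labelling of the tree of finite sequences of naturals (nat list, ordered by
  proper prefix).  Root = [], sons of v are v @ [n], height v = length v,
  branches are the sets of initial segments of infinite sequences nat => nat.\<close>

type_synonym 'a foliage = "nat list \<Rightarrow> 'a set"

definition cofin_omega :: "nat set set" where
  "cofin_omega = {UNIV - F | F. finite F}"

definition gg :: "'b set set \<Rightarrow> 'b set set \<Rightarrow> bool" (infix "\<ggreater>" 50) where
  "\<gamma> \<ggreater> \<delta> \<longleftrightarrow> (\<forall>D\<in>\<delta>. D \<noteq> {} \<longrightarrow> (\<exists>G\<in>\<gamma>. G \<noteq> {} \<and> G \<subseteq> D))"

definition sons :: "nat list \<Rightarrow> nat list set" where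
  "sons v = {v @ [n] | n. True}"

definition shoot :: "'a foliage \<Rightarrow> nat list \<Rightarrow> 'a set set" where
  "shoot F v = {\<Union>x\<in>C. F x | C. C \<subseteq> sons v \<and> finite (sons v - C)}"

definition scope :: "'a foliage \<Rightarrow> 'a \<Rightarrow> nat list set" where
  "scope F p = {x. p \<in> F x}"

definition nbhd :: "'a topology \<Rightarrow> 'a \<Rightarrow> 'a set \<Rightarrow> bool" where
  "nbhd X p U \<longleftrightarrow> U \<subseteq> topspace X \<and> (\<exists>V. openin X V \<and> p \<in> V \<and> V \<subseteq> U)"

definition rise :: "'a foliage \<Rightarrow> 'a \<Rightarrow> 'a set \<Rightarrow> nat set" where
  "rise F p U = {length v | v. v \<in> scope F p \<and> shoot F v \<ggreater> {U}}"

definition Rise :: "'a foliage \<Rightarrow> 'a topology \<Rightarrow> nat set set" where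
  "Rise F X = {rise F p U | p U. p \<in> topspace X \<and> nbhd X p U}"

definition locally_strict :: "'a foliage \<Rightarrow> bool" where
  "locally_strict F \<longleftrightarrow> (\<forall>x. F x = (\<Union>s\<in>sons x. F s) \<and>
      (\<forall>s\<in>sons x. \<forall>t\<in>sons x. s \<noteq> t \<longrightarrow> F s \<inter> F t = {}))"

definition strict_branches :: "'a foliage \<Rightarrow> bool" where
  "strict_branches F \<longleftrightarrow> (\<forall>f :: nat \<Rightarrow> nat. \<exists>p. (\<Inter>n. F (map f [0..<n])) = {p})"

definition open_foliage :: "'a topology \<Rightarrow> 'a foliage \<Rightarrow> bool" where
  "open_foliage X F \<longleftrightarrow> (\<forall>x. openin X (F x))"

definition baire_foliage_tree :: "'a topology \<Rightarrow> 'a foliage \<Rightarrow> bool" where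
  "baire_foliage_tree X F \<longleftrightarrow> open_foliage X F \<and> locally_strict F \<and> strict_branches F
      \<and> F [] = topspace X"

definition grows_into :: "'a foliage \<Rightarrow> 'a topology \<Rightarrow> bool" where
  "grows_into F X \<longleftrightarrow> (\<forall>p\<in>topspace X. \<forall>U. nbhd X p U \<longrightarrow>
      (\<exists>z\<in>scope F p. shoot F z \<ggreater> {U}))"

definition pi_tree :: "'a topology \<Rightarrow> 'a foliage \<Rightarrow> bool" where
  "pi_tree X F \<longleftrightarrow> baire_foliage_tree X F \<and> grows_into F X"

definition has_pi_tree :: "'a topology \<Rightarrow> bool" where
  "has_pi_tree X \<longleftrightarrow> (\<exists>F. pi_tree X F)"

end

theory Submission
  imports Defs
begin

text \<open>A Baire foliage tree on \<open>X\<close> is the same thing as a bijection \<open>\<phi>\<close> from \<open>X\<close> onto the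
  Baire space \<open>\<nat>\<^sup>\<nat>\<close> all of whose cylinder sets are open: the leaves are exactly these
  cylinders, and for such trees a rise level \<open>h\<close> of \<open>(p, U)\<close> means that
  cofinitely many sons of the length-\<open>h\<close> cylinder of \<open>p\<close> lie in \<open>U\<close>.

  For \<open>Y \<times> \<Prod>\<^sub>i X\<^sub>i\<close> enumerate the countable index set and interleave the coordinates: at stage
  \<open>d\<close> one reads the \<open>d\<close>-th coordinate of \<open>Y\<close> and the \<open>(d - k\<^sub>i)\<close>-th coordinate of every \<open>X\<^sub>i\<close>
  whose first index \<open>k\<^sub>i\<close> is at most \<open>d\<close>. This finite tuple is encoded by two natural numbers,
  first its minimum and then its position among the tuples with that minimum. Choosing
  the first number large thus forces every coordinate read at stage \<open>d\<close> to be large, so a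
  basic neighbourhood \<open>V \<times> \<Prod>\<^sub>i W\<^sub>i\<close> is reached through cofinitely many sons of the
  depth-\<open>2d\<close> node as soon as \<open>d\<close> is a rise level of \<open>V\<close> and each \<open>d - k\<^sub>i\<close> is a rise level
  of the finitely many proper \<open>W\<^sub>i\<close>. Rise levels in \<open>Y\<close> are unbounded because \<open>Y\<close> has a
  \<open>\<pi>\<close>-tree, and those in \<open>X\<^sub>i\<close> are cofinite by hypothesis, so such a \<open>d\<close> exists.\<close>

section \<open>Baire foliage trees as coordinate maps into Baire space\<close>

definition coord_foliage :: "('a \<Rightarrow> nat \<Rightarrow> nat) \<Rightarrow> 'a set \<Rightarrow> 'a foliage" where
  "coord_foliage \<phi> S s = {p \<in> S. map (\<phi> p) [0..<length s] = s}"

definition baire_coordinates :: "'a topology \<Rightarrow> ('a \<Rightarrow> nat \<Rightarrow> nat) \<Rightarrow> bool" where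
  "baire_coordinates X \<phi> \<longleftrightarrow>
     bij_betw \<phi> (topspace X) UNIV \<and> (\<forall>s. openin X (coord_foliage \<phi> (topspace X) s))"

lemma mem_coord_foliage_snoc:
  "p \<in> coord_foliage \<phi> S (s @ [n]) \<longleftrightarrow> p \<in> coord_foliage \<phi> S s \<and> \<phi> p (length s) = n"
  by (simp add: coord_foliage_def)

lemma mem_coord_foliage_prefix:
  "q \<in> coord_foliage \<phi> S (map (\<phi> p) [0..<h]) \<longleftrightarrow> q \<in> S \<and> map (\<phi> q) [0..<h] = map (\<phi> p) [0..<h]"
  by (simp add: coord_foliage_def)

lemma scope_coord_foliage:
  "v \<in> scope (coord_foliage \<phi> S) p \<longleftrightarrow> p \<in> S \<and> v = map (\<phi> p) [0..<length v]"
  by (auto simp: scope_def coord_foliage_def)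

lemma locally_strict_coord_foliage: "locally_strict (coord_foliage \<phi> S)"
  unfolding locally_strict_def sons_def by (auto simp: mem_coord_foliage_snoc)

lemma map_upt_eq_all_iff: "(\<forall>n. map g [0..<n] = map f [0..<n]) \<longleftrightarrow> g = f"
proof
  assume eq: "\<forall>n. map g [0..<n] = map f [0..<n]"
  show "g = f"
  proof
    fix j show "g j = f j"
      using eq[rule_format, of "Suc j"] by simp
  qed
qed simp

lemma bij_betw_UNIV_iff_singleton_fibres:
  "bij_betw \<phi> S UNIV \<longleftrightarrow> (\<forall>f. \<exists>p. {p \<in> S. \<phi> p = f} = {p})"
proof
  assume bij: "bij_betw \<phi> S UNIV"
  show "\<forall>f. \<exists>p. {p \<in> S. \<phi> p = f} = {p}"
  proof
    fix f
    have "f \<in> \<phi> ` S"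
      using bij by (simp add: bij_betw_def)
    then obtain p where "p \<in> S" "\<phi> p = f"
      by blast
    then have "{p \<in> S. \<phi> p = f} = {p}"
      using bij by (auto simp: bij_betw_def inj_on_def)
    then show "\<exists>p. {p \<in> S. \<phi> p = f} = {p}" ..
  qed
next
  assume fibres: "\<forall>f. \<exists>p. {p \<in> S. \<phi> p = f} = {p}"
  show "bij_betw \<phi> S UNIV"
    unfolding bij_betw_def inj_on_def
  proof (intro conjI ballI impI)
    fix p q assume "p \<in> S" "q \<in> S" "\<phi> p = \<phi> q"
    moreover obtain r where "{p \<in> S. \<phi> p = \<phi> q} = {r}"
      using fibres by blast
    ultimately show "p = q"
      by (metis (mono_tags, lifting) CollectI singletonD)
  next
    show "\<phi> ` S = UNIV"
    proof (intro set_eqI iffI)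
      fix f
      obtain r where "{p \<in> S. \<phi> p = f} = {r}"
        using fibres by blast
      then show "f \<in> \<phi> ` S"
        by (metis (mono_tags, lifting) image_eqI insertI1 mem_Collect_eq)
    qed simp
  qed
qed

lemma strict_branches_coord_foliage_iff:
  "strict_branches (coord_foliage \<phi> S) \<longleftrightarrow> bij_betw \<phi> S UNIV"
proof -
  have "(\<Inter>n. coord_foliage \<phi> S (map f [0..<n])) = {p \<in> S. \<phi> p = f}" for f
    by (auto simp: coord_foliage_def map_upt_eq_all_iff[symmetric])
  then show ?thesis
    by (simp add: strict_branches_def bij_betw_UNIV_iff_singleton_fibres)
qed

lemma coord_foliage_nonempty:
  assumes "bij_betw \<phi> S UNIV"
  shows "coord_foliage \<phi> S s \<noteq> {}"
proof -
  define f where "f j = (if j < length s then s ! j else 0)" for j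
  have "f \<in> \<phi> ` S"
    using assms by (simp add: bij_betw_def)
  then obtain p where "p \<in> S" "\<phi> p = f"
    by blast
  moreover have "map f [0..<length s] = s"
    by (rule nth_equalityI) (simp_all add: f_def)
  ultimately have "p \<in> coord_foliage \<phi> S s"
    by (simp add: coord_foliage_def)
  then show ?thesis
    by blast
qed

primrec foliage_path :: "'a foliage \<Rightarrow> 'a \<Rightarrow> nat \<Rightarrow> nat list" where
  "foliage_path F p 0 = []"
| "foliage_path F p (Suc k) = foliage_path F p k @ [SOME n. p \<in> F (foliage_path F p k @ [n])]"

definition foliage_coord :: "'a foliage \<Rightarrow> 'a \<Rightarrow> nat \<Rightarrow> nat" where
  "foliage_coord F p j = last (foliage_path F p (Suc j))"

lemma foliage_path_eq_map: "foliage_path F p k = map (foliage_coord F p) [0..<k]"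
  by (induction k) (simp_all add: foliage_coord_def)

lemma locally_strict_son_subset:
  assumes "locally_strict F"
  shows "F (x @ [n]) \<subseteq> F x"
  using assms unfolding locally_strict_def sons_def by blast

lemma locally_strict_subset_root:
  assumes "locally_strict F"
  shows "F s \<subseteq> F []"
proof (induction s rule: rev_induct)
  case (snoc n s)
  then show ?case
    using locally_strict_son_subset[OF assms] by blast
qed simp

lemma locally_strict_son_exists:
  assumes "locally_strict F" and "p \<in> F x"
  shows "\<exists>n. p \<in> F (x @ [n])"
  using assms unfolding locally_strict_def sons_def by blast

lemma locally_strict_son_unique:
  assumes "locally_strict F" and "p \<in> F (x @ [n])" and "p \<in> F (x @ [m])"
  shows "n = m"
proof (rule ccontr)
  assume "n \<noteq> m"
  then have "F (x @ [n]) \<inter> F (x @ [m]) = {}"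
    using assms(1) unfolding locally_strict_def sons_def by blast
  then show False
    using assms(2,3) by blast
qed

lemma locally_strict_mem_foliage_path:
  assumes "locally_strict F" and "p \<in> F []"
  shows "p \<in> F (foliage_path F p k)"
proof (induction k)
  case (Suc k)
  then show ?case
    using someI_ex[OF locally_strict_son_exists[OF assms(1) Suc]] by simp
qed (simp add: assms(2))

lemma locally_strict_foliage_path_unique:
  assumes "locally_strict F" and "p \<in> F s"
  shows "foliage_path F p (length s) = s"
  using assms(2)
proof (induction s rule: rev_induct)
  case (snoc n s)
  have "p \<in> F s"
    using snoc.prems locally_strict_son_subset[OF assms(1)] by blast
  then have path: "foliage_path F p (length s) = s"
    using snoc.IH by blast
  have "p \<in> F (s @ [SOME n. p \<in> F (s @ [n])])"
    using someI_ex[OF locally_strict_son_exists[OF assms(1) \<open>p \<in> F s\<close>]] .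
  then have "(SOME n. p \<in> F (s @ [n])) = n"
    using locally_strict_son_unique[OF assms(1)] snoc.prems by blast
  then show ?case
    by (simp add: path)
qed simp

lemma locally_strict_eq_coord_foliage:
  assumes "locally_strict F"
  shows "F = coord_foliage (foliage_coord F) (F [])"
proof (intro ext equalityI subsetI)
  fix s p assume "p \<in> F s"
  then show "p \<in> coord_foliage (foliage_coord F) (F []) s"
    using locally_strict_subset_root[OF assms] locally_strict_foliage_path_unique[OF assms]
    by (auto simp: coord_foliage_def foliage_path_eq_map[symmetric])
next
  fix s p assume "p \<in> coord_foliage (foliage_coord F) (F []) s"
  then have "p \<in> F []" and "foliage_path F p (length s) = s"
    by (simp_all add: coord_foliage_def foliage_path_eq_map)
  then show "p \<in> F s"
    using locally_strict_mem_foliage_path[OF assms] by metis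
qed

lemma baire_foliage_tree_iff_coordinates:
  "baire_foliage_tree X F \<longleftrightarrow>
     (\<exists>\<phi>. baire_coordinates X \<phi> \<and> F = coord_foliage \<phi> (topspace X))"
proof
  assume F: "baire_foliage_tree X F"
  then have "locally_strict F" and "F [] = topspace X"
    by (simp_all add: baire_foliage_tree_def)
  then have F_eq: "F = coord_foliage (foliage_coord F) (topspace X)"
    using locally_strict_eq_coord_foliage by metis
  have "strict_branches (coord_foliage (foliage_coord F) (topspace X))"
    and "\<forall>s. openin X (coord_foliage (foliage_coord F) (topspace X) s)"
    using F by (simp_all add: baire_foliage_tree_def open_foliage_def flip: F_eq)
  then have "baire_coordinates X (foliage_coord F)"
    by (simp add: baire_coordinates_def strict_branches_coord_foliage_iff)
  with F_eq show "\<exists>\<phi>. baire_coordinates X \<phi> \<and> F = coord_foliage \<phi> (topspace X)"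
    by blast
qed (auto simp: baire_foliage_tree_def baire_coordinates_def open_foliage_def
      coord_foliage_def locally_strict_coord_foliage strict_branches_coord_foliage_iff)

section \<open>Rise levels in coordinates\<close>

lemma gg_shoot_iff_eventually:
  assumes "U \<noteq> {}" and "\<And>k. F (v @ [k]) \<noteq> {}"
  shows "shoot F v \<ggreater> {U} \<longleftrightarrow> (\<forall>\<^sub>F k in sequentially. F (v @ [k]) \<subseteq> U)"
proof
  assume "shoot F v \<ggreater> {U}"
  then obtain G where "G \<in> shoot F v" and "G \<subseteq> U"
    using assms(1) unfolding gg_def by blast
  then obtain C where C: "C \<subseteq> sons v" "finite (sons v - C)" "(\<Union>x\<in>C. F x) \<subseteq> U"
    unfolding shoot_def by blast
  have "(\<lambda>k. v @ [k]) ` {k. v @ [k] \<notin> C} \<subseteq> sons v - C"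
    by (auto simp: sons_def)
  then have "finite ((\<lambda>k. v @ [k]) ` {k. v @ [k] \<notin> C})"
    using C(2) by (rule finite_subset)
  then have "finite {k. v @ [k] \<notin> C}"
    by (rule finite_imageD) (simp add: inj_on_def)
  then have "\<forall>\<^sub>F k in sequentially. v @ [k] \<in> C"
    by (simp add: cofinite_eq_sequentially[symmetric] eventually_cofinite)
  then show "\<forall>\<^sub>F k in sequentially. F (v @ [k]) \<subseteq> U"
    by eventually_elim (use C(3) in blast)
next
  assume "\<forall>\<^sub>F k in sequentially. F (v @ [k]) \<subseteq> U"
  then obtain N where N: "\<And>k. N \<le> k \<Longrightarrow> F (v @ [k]) \<subseteq> U"
    by (auto simp: eventually_sequentially)
  define C where "C = {v @ [k] | k. N \<le> k}"
  have "sons v - C \<subseteq> (\<lambda>k. v @ [k]) ` {..<N}"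
    by (auto simp: C_def sons_def not_le)
  then have "finite (sons v - C)"
    by (rule finite_subset) simp
  moreover have "C \<subseteq> sons v"
    by (auto simp: C_def sons_def)
  ultimately have "(\<Union>x\<in>C. F x) \<in> shoot F v"
    unfolding shoot_def by blast
  moreover have "(\<Union>x\<in>C. F x) \<subseteq> U"
    using N by (auto simp: C_def)
  moreover have "F (v @ [N]) \<subseteq> (\<Union>x\<in>C. F x)"
    by (rule UN_upper) (simp add: C_def)
  then have "(\<Union>x\<in>C. F x) \<noteq> {}"
    using assms(2)[of N] by (metis subset_empty)
  ultimately show "shoot F v \<ggreater> {U}"
    unfolding gg_def by (intro ballI impI bexI[of _ "\<Union>x\<in>C. F x"]) auto
qed

lemma mem_rise_coord_foliage_iff:
  assumes "bij_betw \<phi> S UNIV" and "U \<noteq> {}"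
  shows "h \<in> rise (coord_foliage \<phi> S) p U \<longleftrightarrow>
    p \<in> S \<and> (\<forall>\<^sub>F k in sequentially. coord_foliage \<phi> S (map (\<phi> p) [0..<h] @ [k]) \<subseteq> U)"
proof -
  have "h \<in> rise (coord_foliage \<phi> S) p U \<longleftrightarrow>
      p \<in> S \<and> shoot (coord_foliage \<phi> S) (map (\<phi> p) [0..<h]) \<ggreater> {U}"
  proof
    assume "h \<in> rise (coord_foliage \<phi> S) p U"
    then obtain v where "h = length v" "p \<in> S" "v = map (\<phi> p) [0..<length v]"
        "shoot (coord_foliage \<phi> S) v \<ggreater> {U}"
      unfolding rise_def scope_coord_foliage by blast
    then show "p \<in> S \<and> shoot (coord_foliage \<phi> S) (map (\<phi> p) [0..<h]) \<ggreater> {U}"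
      by simp
  next
    assume "p \<in> S \<and> shoot (coord_foliage \<phi> S) (map (\<phi> p) [0..<h]) \<ggreater> {U}"
    then show "h \<in> rise (coord_foliage \<phi> S) p U"
      unfolding rise_def scope_coord_foliage
      by (intro CollectI exI[of _ "map (\<phi> p) [0..<h]"]) simp
  qed
  then show ?thesis
    using gg_shoot_iff_eventually[OF assms(2) coord_foliage_nonempty[OF assms(1)]] by simp
qed

lemma nbhd_imp_mem: "nbhd X p U \<Longrightarrow> p \<in> U"
  by (auto simp: nbhd_def)

lemma nbhd_Int_openin:
  assumes "nbhd X p U" and "openin X W" and "p \<in> W"
  shows "nbhd X p (U \<inter> W)"
proof -
  obtain V where "openin X V" "p \<in> V" "V \<subseteq> U" "U \<subseteq> topspace X"
    using assms(1) unfolding nbhd_def by blast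
  with assms(2,3) show ?thesis
    unfolding nbhd_def by (intro conjI exI[of _ "V \<inter> W"]) auto
qed

lemma eventually_sons_subset_if_mem_rise:
  assumes "bij_betw \<phi> S UNIV" and "nbhd X p U" and "h \<in> rise (coord_foliage \<phi> S) p U"
  shows "\<forall>\<^sub>F k in sequentially. coord_foliage \<phi> S (map (\<phi> p) [0..<h] @ [k]) \<subseteq> U"
  using assms nbhd_imp_mem[OF assms(2)] mem_rise_coord_foliage_iff[OF assms(1)] by blast

lemma rise_nonempty:
  assumes "grows_into F X" and "p \<in> topspace X" and "nbhd X p U"
  shows "rise F p U \<noteq> {}"
  using assms unfolding grows_into_def rise_def by blast

lemma gg_singleton_mono:
  assumes "\<gamma> \<ggreater> {U}" and "U \<subseteq> U'" and "U \<noteq> {}"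
  shows "\<gamma> \<ggreater> {U'}"
proof -
  obtain G where "G \<in> \<gamma>" "G \<noteq> {}" "G \<subseteq> U"
    using assms(1,3) unfolding gg_def by blast
  with assms(2) show ?thesis
    unfolding gg_def by (intro ballI impI bexI[of _ G]) auto
qed
lemma rise_mono:
  assumes "U \<subseteq> U'" and "U \<noteq> {}"
  shows "rise F p U \<subseteq> rise F p U'"
  unfolding rise_def using gg_singleton_mono[OF _ assms] by blast

lemma eventually_mem_rise:
  assumes "grows_into F X" and "cofin_omega \<ggreater> Rise F X"
    and "p \<in> topspace X" and "nbhd X p U"
  shows "\<forall>\<^sub>F h in sequentially. h \<in> rise F p U"
proof -
  have "rise F p U \<in> Rise F X"
    using assms(3,4) unfolding Rise_def by blast
  then obtain E where "finite E" and "UNIV - E \<subseteq> rise F p U"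
    using assms(2) rise_nonempty[OF assms(1,3,4)] unfolding gg_def cofin_omega_def by blast
  moreover from \<open>finite E\<close> have "\<forall>\<^sub>F h in sequentially. h \<notin> E"
    by (simp add: cofinite_eq_sequentially[symmetric] eventually_cofinite)
  ultimately show ?thesis
    by (metis (mono_tags, lifting) DiffI UNIV_I eventually_mono subsetD)
qed

lemma rise_coord_foliage_ge_length:
  assumes "bij_betw \<phi> S UNIV" and "nbhd X p U"
    and "U \<subseteq> coord_foliage \<phi> S (map (\<phi> p) [0..<m])"
    and "h \<in> rise (coord_foliage \<phi> S) p U"
  shows "m \<le> h"
proof (rule ccontr)
  assume "\<not> m \<le> h"
  have "\<forall>\<^sub>F k in sequentially. \<phi> p h < k \<and> coord_foliage \<phi> S (map (\<phi> p) [0..<h] @ [k]) \<subseteq> U"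
    using eventually_sons_subset_if_mem_rise[OF assms(1,2,4)] by (intro eventually_conj) simp_all
  then obtain k where k: "\<phi> p h < k" "coord_foliage \<phi> S (map (\<phi> p) [0..<h] @ [k]) \<subseteq> U"
    using eventually_happens'[OF sequentially_bot] by blast
  obtain q where q: "q \<in> coord_foliage \<phi> S (map (\<phi> p) [0..<h] @ [k])"
    using coord_foliage_nonempty[OF assms(1)] by blast
  then have "\<phi> q h = k"
    by (simp add: mem_coord_foliage_snoc)
  moreover have "map (\<phi> q) [0..<m] = map (\<phi> p) [0..<m]"
    using q k(2) assms(3) by (auto simp: mem_coord_foliage_prefix)
  then have "\<phi> q h = \<phi> p h"
    using \<open>\<not> m \<le> h\<close> by (simp add: map_eq_conv)
  ultimately show False
    using k(1) by simp
qed

text \<open>Rise levels are unbounded in any space with a \<open>\<pi>\<close>-tree: shrinking \<open>U\<close> to the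
  length-\<open>m\<close> cylinder of \<open>p\<close> forces the level supplied by \<open>grows_into\<close> to be \<open>\<ge> m\<close>.\<close>

lemma frequently_mem_rise:
  assumes "baire_coordinates X \<phi>" and "grows_into (coord_foliage \<phi> (topspace X)) X"
    and "p \<in> topspace X" and "nbhd X p U"
  shows "\<exists>\<^sub>F h in sequentially. h \<in> rise (coord_foliage \<phi> (topspace X)) p U"
  unfolding frequently_sequentially
proof
  fix m
  let ?F = "coord_foliage \<phi> (topspace X)"
  let ?U = "U \<inter> ?F (map (\<phi> p) [0..<m])"
  have bij: "bij_betw \<phi> (topspace X) UNIV"
    using assms(1) by (simp add: baire_coordinates_def)
  have "nbhd X p ?U"
    using assms(1,3,4)
    by (intro nbhd_Int_openin) (simp_all add: baire_coordinates_def mem_coord_foliage_prefix)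
  then obtain h where h: "h \<in> rise ?F p ?U"
    using rise_nonempty[OF assms(2,3)] by blast
  then have "m \<le> h"
    using rise_coord_foliage_ge_length[OF bij \<open>nbhd X p ?U\<close>] by blast
  moreover have "h \<in> rise ?F p U"
    using h rise_mono[of ?U U] nbhd_imp_mem[OF \<open>nbhd X p ?U\<close>] by blast
  ultimately show "\<exists>h\<ge>m. h \<in> rise ?F p U"
    by blast
qed

lemma nbhd_prod_product_topologyE:
  assumes "nbhd (prod_topology Y (product_topology X I)) (y, x) U"
  obtains V W where "nbhd Y y V" and "\<And>i. i \<in> I \<Longrightarrow> nbhd (X i) (x i) (W i)"
    and "finite {i \<in> I. W i \<noteq> topspace (X i)}" and "V \<times> PiE I W \<subseteq> U"
proof -
  obtain N where N: "openin (prod_topology Y (product_topology X I)) N" "(y, x) \<in> N" "N \<subseteq> U"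
    using assms unfolding nbhd_def by blast
  have "\<exists>V T. openin Y V \<and> openin (product_topology X I) T \<and> y \<in> V \<and> x \<in> T \<and> V \<times> T \<subseteq> N"
    using N(1,2) unfolding openin_prod_topology_alt by simp
  then obtain V T where V: "openin Y V" "y \<in> V" and T: "openin (product_topology X I) T" "x \<in> T"
    and VT: "V \<times> T \<subseteq> N"
    by blast
  have "\<exists>W. finite {i \<in> I. W i \<noteq> topspace (X i)} \<and> (\<forall>i\<in>I. openin (X i) (W i)) \<and>
      x \<in> PiE I W \<and> PiE I W \<subseteq> T"
    using T unfolding openin_product_topology_alt by simp
  then obtain W where W: "finite {i \<in> I. W i \<noteq> topspace (X i)}"
      "\<And>i. i \<in> I \<Longrightarrow> openin (X i) (W i)" "x \<in> PiE I W" "PiE I W \<subseteq> T"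
    by blast
  have "nbhd Y y V"
    using V openin_subset unfolding nbhd_def by blast
  moreover have "nbhd (X i) (x i) (W i)" if "i \<in> I" for i
    using that W(2,3) openin_subset unfolding nbhd_def by (fastforce simp: PiE_iff)
  moreover have "V \<times> PiE I W \<subseteq> U"
    using VT W(4) N(3) by blast
  ultimately show ?thesis
    using that W(1) by blast
qed

section \<open>Interleaving the coordinates of a countable product\<close>

locale product_coordinates =
  fixes I :: "'i set" and e :: "nat \<Rightarrow> 'i"
    and X :: "'i \<Rightarrow> 'a topology" and \<phi> :: "'i \<Rightarrow> 'a \<Rightarrow> nat \<Rightarrow> nat"
    and Y :: "'b topology" and \<psi> :: "'b \<Rightarrow> nat \<Rightarrow> nat"
  assumes range_enum: "range e = I"
    and coordinates_Y: "baire_coordinates Y \<psi>"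
    and coordinates_X: "\<And>i. i \<in> I \<Longrightarrow> baire_coordinates (X i) (\<phi> i)"
begin

abbreviation Z :: "('b \<times> ('i \<Rightarrow> 'a)) topology" where
  "Z \<equiv> prod_topology Y (product_topology X I)"

definition entry :: "'i \<Rightarrow> nat" where
  "entry i = (LEAST k. e k = i)"

definition active :: "nat \<Rightarrow> 'i set" where
  "active d = e ` {..d}"

definition stage :: "nat \<Rightarrow> 'b \<times> ('i \<Rightarrow> 'a) \<Rightarrow> nat \<times> ('i \<Rightarrow> nat)" where
  "stage d z = (\<psi> (fst z) d, \<lambda>i\<in>active d. \<phi> i (snd z i) (d - entry i))"

abbreviation stage_tuples :: "nat \<Rightarrow> (nat \<times> ('i \<Rightarrow> nat)) set" where
  "stage_tuples d \<equiv> UNIV \<times> (active d \<rightarrow>\<^sub>E UNIV)"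

definition stage_min :: "nat \<Rightarrow> nat \<times> ('i \<Rightarrow> nat) \<Rightarrow> nat" where
  "stage_min d u = Min (insert (fst u) (snd u ` active d))"

definition enum_tuples :: "nat \<Rightarrow> nat \<Rightarrow> nat \<Rightarrow> nat \<times> ('i \<Rightarrow> nat)" where
  "enum_tuples d n = from_nat_into {u \<in> stage_tuples d. stage_min d u = n}"

definition prod_coord :: "'b \<times> ('i \<Rightarrow> 'a) \<Rightarrow> nat \<Rightarrow> nat" where
  "prod_coord z m =
     (let d = m div 2; u = stage d z
      in if even m then stage_min d u else inv_into UNIV (enum_tuples d (stage_min d u)) u)"

lemma bij_\<psi>: "bij_betw \<psi> (topspace Y) UNIV"
  using coordinates_Y by (simp add: baire_coordinates_def)

lemma bij_\<phi>: "i \<in> I \<Longrightarrow> bij_betw (\<phi> i) (topspace (X i)) UNIV"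
  using coordinates_X by (simp add: baire_coordinates_def)

lemma enum_entry: "i \<in> I \<Longrightarrow> e (entry i) = i"
  unfolding entry_def by (rule LeastI_ex) (use range_enum in blast)

lemma mem_active_iff: "i \<in> active d \<longleftrightarrow> i \<in> I \<and> entry i \<le> d"
proof
  assume "i \<in> active d"
  then obtain k where "k \<le> d" and "e k = i"
    by (auto simp: active_def)
  moreover from \<open>e k = i\<close> have "entry i \<le> k"
    unfolding entry_def by (rule Least_le)
  ultimately show "i \<in> I \<and> entry i \<le> d"
    using range_enum by auto
next
  assume "i \<in> I \<and> entry i \<le> d"
  then show "i \<in> active d"
    unfolding active_def using enum_entry by (metis atMost_iff image_eqI)
qed

lemma finite_active: "finite (active d)"
  by (simp add: active_def)

lemma active_nonempty: "active d \<noteq> {}"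
  by (simp add: active_def)

lemma fst_stage: "fst (stage d z) = \<psi> (fst z) d"
  by (simp add: stage_def)

lemma snd_stage_entry: "i \<in> I \<Longrightarrow> snd (stage (entry i + h) z) i = \<phi> i (snd z i) h"
  by (simp add: stage_def mem_active_iff)

lemma stage_in_tuples: "stage d z \<in> stage_tuples d"
  by (simp add: stage_def)

lemma infinite_tuples_with_min: "infinite {u \<in> stage_tuples d. stage_min d u = n}"
proof -
  let ?g = "\<lambda>j::nat. (n, \<lambda>i\<in>active d. n + j)"
  obtain i where "i \<in> active d"
    using active_nonempty by blast
  then have "inj ?g"
    by (intro injI) (metis add_left_cancel restrict_apply' snd_conv)
  moreover have "range ?g \<subseteq> {u \<in> stage_tuples d. stage_min d u = n}"
    using active_nonempty by (auto simp: stage_min_def image_constant_conv)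
  ultimately show ?thesis
    using range_inj_infinite infinite_super by blast
qed

lemma bij_enum_tuples: "bij_betw (enum_tuples d n) UNIV {u \<in> stage_tuples d. stage_min d u = n}"
proof -
  have "countable (stage_tuples d)"
    by (intro countable_SIGMA countable_PiE finite_active) simp_all
  then show ?thesis
    unfolding enum_tuples_def
    by (intro bij_betw_from_nat_into infinite_tuples_with_min) (auto intro: countable_subset)
qed

lemma enum_tuples_in_tuples: "enum_tuples d n k \<in> stage_tuples d"
  and stage_min_enum_tuples: "stage_min d (enum_tuples d n k) = n"
  using bij_betwE[OF bij_enum_tuples, of d n] by blast+

lemma prod_coord_even: "prod_coord z (2 * d) = stage_min d (stage d z)"
  by (simp add: prod_coord_def Let_def)

lemma enum_tuples_prod_coord:
  "enum_tuples d (prod_coord z (2 * d)) (prod_coord z (2 * d + 1)) = stage d z"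
proof -
  have "stage d z \<in> range (enum_tuples d (stage_min d (stage d z)))"
    using bij_enum_tuples stage_in_tuples by (auto simp: bij_betw_def)
  then show ?thesis
    by (simp add: prod_coord_def Let_def f_inv_into_f)
qed

lemma prod_coord_eqI:
  assumes "\<And>d. stage d z = enum_tuples d (f (2 * d)) (f (2 * d + 1))"
  shows "prod_coord z = f"
proof
  fix m :: nat
  define d where "d = m div 2"
  have "stage_min d (stage d z) = f (2 * d)"
    using assms stage_min_enum_tuples by simp
  moreover have "inv_into UNIV (enum_tuples d (f (2 * d))) (stage d z) = f (2 * d + 1)"
    using assms bij_enum_tuples by (simp add: bij_betw_def inv_into_f_f)
  ultimately show "prod_coord z m = f m"
    by (cases "even m") (auto simp: prod_coord_def Let_def d_def elim!: oddE)
qed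

lemma prod_coord_prefix_eq_iff:
  "map (prod_coord q) [0..<2 * d] = map (prod_coord p) [0..<2 * d] \<longleftrightarrow>
     (\<forall>d'<d. stage d' q = stage d' p)"
proof
  assume eq: "map (prod_coord q) [0..<2 * d] = map (prod_coord p) [0..<2 * d]"
  show "\<forall>d'<d. stage d' q = stage d' p"
  proof (intro allI impI)
    fix d' assume "d' < d"
    then have "prod_coord q (2 * d') = prod_coord p (2 * d')"
      and "prod_coord q (2 * d' + 1) = prod_coord p (2 * d' + 1)"
      using eq by (simp_all add: map_eq_conv)
    then show "stage d' q = stage d' p"
      using enum_tuples_prod_coord[of d' q] enum_tuples_prod_coord[of d' p] by simp
  qed
next
  assume "\<forall>d'<d. stage d' q = stage d' p"
  then show "map (prod_coord q) [0..<2 * d] = map (prod_coord p) [0..<2 * d]"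
    by (auto simp: map_eq_conv less_mult_imp_div_less prod_coord_def)
qed

lemma stages_agree_iff:
  "(\<forall>d'<d. stage d' q = stage d' p) \<longleftrightarrow>
     map (\<psi> (fst q)) [0..<d] = map (\<psi> (fst p)) [0..<d] \<and>
     (\<forall>i\<in>active d. map (\<phi> i (snd q i)) [0..<d - entry i] = map (\<phi> i (snd p i)) [0..<d - entry i])"
proof
  assume agree: "\<forall>d'<d. stage d' q = stage d' p"
  have "\<psi> (fst q) j = \<psi> (fst p) j" if "j < d" for j
    using agree that fst_stage by metis
  moreover have "\<phi> i (snd q i) j = \<phi> i (snd p i) j" if "i \<in> active d" and "j < d - entry i" for i j
  proof -
    have "i \<in> I" and "entry i + j < d"
      using that by (auto simp: mem_active_iff)
    then show ?thesis
      using agree snd_stage_entry[of i j] by metis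
  qed
  ultimately show "map (\<psi> (fst q)) [0..<d] = map (\<psi> (fst p)) [0..<d] \<and>
     (\<forall>i\<in>active d. map (\<phi> i (snd q i)) [0..<d - entry i] = map (\<phi> i (snd p i)) [0..<d - entry i])"
    by (simp add: map_eq_conv)
next
  assume "map (\<psi> (fst q)) [0..<d] = map (\<psi> (fst p)) [0..<d] \<and>
     (\<forall>i\<in>active d. map (\<phi> i (snd q i)) [0..<d - entry i] = map (\<phi> i (snd p i)) [0..<d - entry i])"
  then have Y: "\<And>j. j < d \<Longrightarrow> \<psi> (fst q) j = \<psi> (fst p) j"
    and X: "\<And>i j. i \<in> active d \<Longrightarrow> j < d - entry i \<Longrightarrow> \<phi> i (snd q i) j = \<phi> i (snd p i) j"
    by (simp_all add: map_eq_conv)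
  show "\<forall>d'<d. stage d' q = stage d' p"
  proof (intro allI impI)
    fix d' assume "d' < d"
    moreover have "i \<in> active d \<and> d' - entry i < d - entry i" if "i \<in> active d'" for i
      using that \<open>d' < d\<close> by (auto simp: mem_active_iff)
    ultimately show "stage d' q = stage d' p"
      using Y X by (auto simp: stage_def fun_eq_iff)
  qed
qed

lemma stage_min_le_fst: "stage_min d (stage d z) \<le> \<psi> (fst z) d"
  by (simp add: stage_min_def stage_def finite_active)

lemma stage_min_le_snd: "i \<in> active d \<Longrightarrow> stage_min d (stage d z) \<le> \<phi> i (snd z i) (d - entry i)"
  by (simp add: stage_min_def stage_def finite_active)

lemma stages_surj:
  assumes "\<And>d. u d \<in> stage_tuples d"
  shows "\<exists>z\<in>topspace Z. \<forall>d. stage d z = u d"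
proof (intro bexI allI)
  define y where "y = inv_into (topspace Y) \<psi> (\<lambda>d. fst (u d))"
  define x where "x = (\<lambda>i\<in>I. inv_into (topspace (X i)) (\<phi> i) (\<lambda>h. snd (u (entry i + h)) i))"
  have y: "y \<in> topspace Y" "\<psi> y = (\<lambda>d. fst (u d))"
    using bij_\<psi> unfolding y_def bij_betw_def by (auto intro: inv_into_into f_inv_into_f)
  have x: "x i \<in> topspace (X i)" "\<phi> i (x i) = (\<lambda>h. snd (u (entry i + h)) i)" if "i \<in> I" for i
    using bij_\<phi>[OF that] that unfolding x_def bij_betw_def
    by (auto intro: inv_into_into f_inv_into_f)
  show "(y, x) \<in> topspace Z"
    using y x by (auto simp: x_def)
  fix d
  show "stage d (y, x) = u d"
  proof -
    have "snd (stage d (y, x)) i = snd (u d) i" for i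
      using x assms[of d] by (auto simp: stage_def mem_active_iff PiE_iff extensional_def)
    then show ?thesis
      using y by (simp add: stage_def prod_eq_iff fun_eq_iff)
  qed
qed

lemma stages_inj:
  assumes "q \<in> topspace Z" and "p \<in> topspace Z" and "\<And>d. stage d q = stage d p"
  shows "q = p"
proof -
  have "\<psi> (fst q) = \<psi> (fst p)"
  proof
    fix d show "\<psi> (fst q) d = \<psi> (fst p) d"
      using assms(3)[of d] fst_stage by metis
  qed
  then have "fst q = fst p"
    using assms(1,2) bij_\<psi> by (simp add: bij_betw_def inj_on_def mem_Times_iff)
  moreover have "snd q i = snd p i" for i
  proof (cases "i \<in> I")
    case True
    have "\<phi> i (snd q i) = \<phi> i (snd p i)"
    proof
      fix h show "\<phi> i (snd q i) h = \<phi> i (snd p i) h"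
        using assms(3)[of "entry i + h"] snd_stage_entry[OF True] by metis
    qed
    then show ?thesis
      using assms(1,2) bij_\<phi>[OF True] True by (simp add: bij_betw_def inj_on_def mem_Times_iff PiE_iff)
  next
    case False
    then show ?thesis
      using assms(1,2) by (auto simp: mem_Times_iff PiE_iff extensional_def)
  qed
  ultimately show ?thesis
    by (simp add: prod_eq_iff fun_eq_iff)
qed

lemma bij_prod_coord: "bij_betw prod_coord (topspace Z) UNIV"
  unfolding bij_betw_def
proof
  show "inj_on prod_coord (topspace Z)"
  proof (rule inj_onI)
    fix q p assume qp: "q \<in> topspace Z" "p \<in> topspace Z" "prod_coord q = prod_coord p"
    have "stage d q = stage d p" for d
      using qp(3) prod_coord_prefix_eq_iff[of q "Suc d" p] by simp
    then show "q = p"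
      by (rule stages_inj[OF qp(1,2)])
  qed
  show "prod_coord ` topspace Z = UNIV"
  proof (intro set_eqI iffI)
    fix f :: "nat \<Rightarrow> nat"
    obtain z where "z \<in> topspace Z" and "\<And>d. stage d z = enum_tuples d (f (2 * d)) (f (2 * d + 1))"
      using stages_surj[of "\<lambda>d. enum_tuples d (f (2 * d)) (f (2 * d + 1))"] enum_tuples_in_tuples
      by blast
    then show "f \<in> prod_coord ` topspace Z"
      using prod_coord_eqI by blast
  qed simp
qed

lemma stages_agree_eq_Times:
  "{q \<in> topspace Z. \<forall>d'<L. stage d' q = stage d' p} =
     coord_foliage \<psi> (topspace Y) (map (\<psi> (fst p)) [0..<L]) \<times>
     PiE I (\<lambda>i. if i \<in> active L
       then coord_foliage (\<phi> i) (topspace (X i)) (map (\<phi> i (snd p i)) [0..<L - entry i])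
       else topspace (X i))"
  unfolding stages_agree_iff
  by (auto simp: mem_coord_foliage_prefix mem_Times_iff PiE_iff extensional_def mem_active_iff
      split: if_splits)

lemma openin_stages_agree: "openin Z {q \<in> topspace Z. \<forall>d'<L. stage d' q = stage d' p}"
proof -
  let ?W = "\<lambda>i. if i \<in> active L
    then coord_foliage (\<phi> i) (topspace (X i)) (map (\<phi> i (snd p i)) [0..<L - entry i])
    else topspace (X i)"
  have "{i \<in> I. ?W i \<noteq> topspace (X i)} \<subseteq> active L"
    by auto
  then have "openin (product_topology X I) (PiE I ?W)"
    using coordinates_X finite_active
    by (auto simp: openin_PiE_gen baire_coordinates_def intro: finite_subset)
  then show ?thesis
    unfolding stages_agree_eq_Times using coordinates_Y
    by (simp add: openin_prod_Times_iff baire_coordinates_def)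
qed

lemma openin_prod_coord_foliage: "openin Z (coord_foliage prod_coord (topspace Z) s)"
proof (rule openin_subopen[THEN iffD2], intro ballI)
  fix p assume p: "p \<in> coord_foliage prod_coord (topspace Z) s"
  let ?T = "{q \<in> topspace Z. \<forall>d'<length s. stage d' q = stage d' p}"
  have "?T \<subseteq> coord_foliage prod_coord (topspace Z) s"
  proof
    fix q assume "q \<in> ?T"
    then have "q \<in> topspace Z"
      and "map (prod_coord q) [0..<2 * length s] = map (prod_coord p) [0..<2 * length s]"
      by (simp_all add: prod_coord_prefix_eq_iff del: map_eq_conv)
    moreover from this(2) have "map (prod_coord q) [0..<length s] = map (prod_coord p) [0..<length s]"
      by simp
    ultimately show "q \<in> coord_foliage prod_coord (topspace Z) s"
      using p by (simp add: coord_foliage_def del: map_eq_conv)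
  qed
  moreover have "p \<in> ?T"
    using p by (simp add: coord_foliage_def)
  ultimately show "\<exists>T. openin Z T \<and> p \<in> T \<and> T \<subseteq> coord_foliage prod_coord (topspace Z) s"
    using openin_stages_agree by blast
qed

lemma baire_coordinates_prod_coord: "baire_coordinates Z prod_coord"
  using bij_prod_coord openin_prod_coord_foliage by (simp add: baire_coordinates_def)

lemma prod_coord_son_subset:
  assumes "p \<in> topspace Z"
    and sons_Y: "\<And>k. n \<le> k \<Longrightarrow> coord_foliage \<psi> (topspace Y) (map (\<psi> (fst p)) [0..<d] @ [k]) \<subseteq> V"
    and active_W: "\<And>i. i \<in> I \<Longrightarrow> W i \<noteq> topspace (X i) \<Longrightarrow> i \<in> active d"
    and sons_X: "\<And>i k. i \<in> I \<Longrightarrow> W i \<noteq> topspace (X i) \<Longrightarrow> n \<le> k \<Longrightarrow>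
      coord_foliage (\<phi> i) (topspace (X i)) (map (\<phi> i (snd p i)) [0..<d - entry i] @ [k]) \<subseteq> W i"
  shows "coord_foliage prod_coord (topspace Z) (map (prod_coord p) [0..<2 * d] @ [n]) \<subseteq> V \<times> PiE I W"
proof
  fix q assume "q \<in> coord_foliage prod_coord (topspace Z) (map (prod_coord p) [0..<2 * d] @ [n])"
  then have q: "q \<in> topspace Z" "map (prod_coord q) [0..<2 * d] = map (prod_coord p) [0..<2 * d]"
    and min: "stage_min d (stage d q) = n"
    by (simp_all add: mem_coord_foliage_snoc mem_coord_foliage_prefix prod_coord_even)
  have agree_Y: "map (\<psi> (fst q)) [0..<d] = map (\<psi> (fst p)) [0..<d]"
    and agree_X: "\<And>i. i \<in> active d \<Longrightarrow>
      map (\<phi> i (snd q i)) [0..<d - entry i] = map (\<phi> i (snd p i)) [0..<d - entry i]"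
    using q(2) unfolding prod_coord_prefix_eq_iff stages_agree_iff by blast+
  have "fst q \<in> coord_foliage \<psi> (topspace Y) (map (\<psi> (fst p)) [0..<d] @ [\<psi> (fst q) d])"
    using q(1) agree_Y by (simp add: mem_coord_foliage_snoc mem_coord_foliage_prefix mem_Times_iff)
  then have "fst q \<in> V"
    using sons_Y min stage_min_le_fst by blast
  moreover have "snd q i \<in> W i" if "i \<in> I" for i
  proof (cases "W i = topspace (X i)")
    case True
    then show ?thesis
      using q(1) that by (auto simp: mem_Times_iff PiE_iff)
  next
    case False
    then have "i \<in> active d"
      using active_W that by blast
    then have "snd q i \<in> coord_foliage (\<phi> i) (topspace (X i))
        (map (\<phi> i (snd p i)) [0..<d - entry i] @ [\<phi> i (snd q i) (d - entry i)])"
      using q(1) agree_X that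
      by (simp add: mem_coord_foliage_snoc mem_coord_foliage_prefix mem_Times_iff PiE_iff)
    then show ?thesis
      using sons_X[OF that False] min stage_min_le_snd[OF \<open>i \<in> active d\<close>] by blast
  qed
  moreover have "snd q \<in> extensional I"
    using q(1) by (simp add: mem_Times_iff PiE_iff)
  ultimately show "q \<in> V \<times> PiE I W"
    by (simp add: mem_Times_iff PiE_iff)
qed

lemma eventually_prod_coord_son_subset:
  assumes "p \<in> topspace Z" and "finite {i \<in> I. W i \<noteq> topspace (X i)}"
    and "\<forall>\<^sub>F k in sequentially. coord_foliage \<psi> (topspace Y) (map (\<psi> (fst p)) [0..<d] @ [k]) \<subseteq> V"
    and "\<And>i. i \<in> I \<Longrightarrow> W i \<noteq> topspace (X i) \<Longrightarrow> i \<in> active d \<and> (\<forall>\<^sub>F k in sequentially.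
      coord_foliage (\<phi> i) (topspace (X i)) (map (\<phi> i (snd p i)) [0..<d - entry i] @ [k]) \<subseteq> W i)"
  shows "\<forall>\<^sub>F n in sequentially.
    coord_foliage prod_coord (topspace Z) (map (prod_coord p) [0..<2 * d] @ [n]) \<subseteq> V \<times> PiE I W"
proof -
  let ?K = "{i \<in> I. W i \<noteq> topspace (X i)}"
  have "\<forall>\<^sub>F k in sequentially. \<forall>i\<in>?K.
      coord_foliage (\<phi> i) (topspace (X i)) (map (\<phi> i (snd p i)) [0..<d - entry i] @ [k]) \<subseteq> W i"
    using assms(2,4) by (intro eventually_ball_finite) auto
  with assms(3) have "\<forall>\<^sub>F n in sequentially. \<forall>k\<ge>n.
      coord_foliage \<psi> (topspace Y) (map (\<psi> (fst p)) [0..<d] @ [k]) \<subseteq> V \<and> (\<forall>i\<in>?K.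
      coord_foliage (\<phi> i) (topspace (X i)) (map (\<phi> i (snd p i)) [0..<d - entry i] @ [k]) \<subseteq> W i)"
    by (intro eventually_all_ge_at_top eventually_conj)
  then show ?thesis
  proof eventually_elim
    case (elim n)
    then show ?case
      using prod_coord_son_subset[OF assms(1), of n d V W] assms(4) by blast
  qed
qed

lemma common_rise_level_exists:
  assumes grows_Y: "grows_into (coord_foliage \<psi> (topspace Y)) Y"
    and grows_X: "\<And>i. i \<in> I \<Longrightarrow> grows_into (coord_foliage (\<phi> i) (topspace (X i))) (X i)"
    and rise_X: "\<And>i. i \<in> I \<Longrightarrow> cofin_omega \<ggreater> Rise (coord_foliage (\<phi> i) (topspace (X i))) (X i)"
    and p: "p \<in> topspace Z" and V: "nbhd Y (fst p) V"
    and W: "\<And>i. i \<in> I \<Longrightarrow> nbhd (X i) (snd p i) (W i)"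
    and finite_W: "finite {i \<in> I. W i \<noteq> topspace (X i)}"
  shows "\<exists>d. d \<in> rise (coord_foliage \<psi> (topspace Y)) (fst p) V \<and>
    (\<forall>i\<in>I. W i \<noteq> topspace (X i) \<longrightarrow>
      i \<in> active d \<and> d - entry i \<in> rise (coord_foliage (\<phi> i) (topspace (X i))) (snd p i) (W i))"
proof -
  let ?K = "{i \<in> I. W i \<noteq> topspace (X i)}"
  let ?good = "\<lambda>i d. i \<in> active d \<and>
    d - entry i \<in> rise (coord_foliage (\<phi> i) (topspace (X i))) (snd p i) (W i)"
  have "\<forall>\<^sub>F d in sequentially. ?good i d" if "i \<in> ?K" for i
  proof -
    have i: "i \<in> I"
      using that by simp
    then have "snd p i \<in> topspace (X i)"
      using p by (auto simp: mem_Times_iff PiE_iff)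
    then have "\<forall>\<^sub>F h in sequentially.
        h \<in> rise (coord_foliage (\<phi> i) (topspace (X i))) (snd p i) (W i)"
      by (rule eventually_mem_rise[OF grows_X[OF i] rise_X[OF i] _ W[OF i]])
    then have "\<forall>\<^sub>F d in sequentially.
        d - entry i \<in> rise (coord_foliage (\<phi> i) (topspace (X i))) (snd p i) (W i)"
      using filterlim_minus_const_nat_at_top by (rule eventually_compose_filterlim)
    moreover have "\<forall>\<^sub>F d in sequentially. i \<in> active d"
      using i by (simp add: mem_active_iff eventually_ge_at_top)
    ultimately show ?thesis
      by eventually_elim simp
  qed
  then have "\<forall>\<^sub>F d in sequentially. \<forall>i\<in>?K. ?good i d"
    using finite_W by (intro eventually_ball_finite) auto
  moreover have "\<exists>\<^sub>F d in sequentially. d \<in> rise (coord_foliage \<psi> (topspace Y)) (fst p) V"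
    using p by (intro frequently_mem_rise coordinates_Y grows_Y V) (auto simp: mem_Times_iff)
  ultimately have "\<exists>\<^sub>F d in sequentially.
      d \<in> rise (coord_foliage \<psi> (topspace Y)) (fst p) V \<and> (\<forall>i\<in>?K. ?good i d)"
    by (intro frequently_eventually_frequently)
  then have "\<exists>d. d \<in> rise (coord_foliage \<psi> (topspace Y)) (fst p) V \<and> (\<forall>i\<in>?K. ?good i d)"
    by (rule frequently_ex)
  then show ?thesis
    by blast
qed

lemma grows_into_prod_coord:
  assumes grows_Y: "grows_into (coord_foliage \<psi> (topspace Y)) Y"
    and grows_X: "\<And>i. i \<in> I \<Longrightarrow> grows_into (coord_foliage (\<phi> i) (topspace (X i))) (X i)"
    and rise_X: "\<And>i. i \<in> I \<Longrightarrow> cofin_omega \<ggreater> Rise (coord_foliage (\<phi> i) (topspace (X i))) (X i)"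
  shows "grows_into (coord_foliage prod_coord (topspace Z)) Z"
  unfolding grows_into_def
proof (intro ballI allI impI)
  fix p U assume p: "p \<in> topspace Z" and U: "nbhd Z p U"
  from U have "nbhd Z (fst p, snd p) U"
    by simp
  then obtain V W where V: "nbhd Y (fst p) V" and W: "\<And>i. i \<in> I \<Longrightarrow> nbhd (X i) (snd p i) (W i)"
    and finite_W: "finite {i \<in> I. W i \<noteq> topspace (X i)}" and VW: "V \<times> PiE I W \<subseteq> U"
    by (rule nbhd_prod_product_topologyE) blast
  obtain d where rise_Y: "d \<in> rise (coord_foliage \<psi> (topspace Y)) (fst p) V"
    and rise_W: "\<And>i. i \<in> I \<Longrightarrow> W i \<noteq> topspace (X i) \<Longrightarrow>
      i \<in> active d \<and> d - entry i \<in> rise (coord_foliage (\<phi> i) (topspace (X i))) (snd p i) (W i)"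
    using common_rise_level_exists[OF grows_Y grows_X rise_X p V W finite_W] by blast
  have "\<forall>\<^sub>F n in sequentially.
      coord_foliage prod_coord (topspace Z) (map (prod_coord p) [0..<2 * d] @ [n]) \<subseteq> V \<times> PiE I W"
    using p finite_W eventually_sons_subset_if_mem_rise[OF bij_\<psi> V rise_Y]
      eventually_sons_subset_if_mem_rise[OF bij_\<phi> W] rise_W
    by (intro eventually_prod_coord_son_subset) auto
  then have "\<forall>\<^sub>F n in sequentially.
      coord_foliage prod_coord (topspace Z) (map (prod_coord p) [0..<2 * d] @ [n]) \<subseteq> U"
    by eventually_elim (use VW in blast)
  then have "2 * d \<in> rise (coord_foliage prod_coord (topspace Z)) p U"
    using p nbhd_imp_mem[OF U] by (subst mem_rise_coord_foliage_iff[OF bij_prod_coord]) auto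
  then show "\<exists>z\<in>scope (coord_foliage prod_coord (topspace Z)) p.
      shoot (coord_foliage prod_coord (topspace Z)) z \<ggreater> {U}"
    unfolding rise_def by blast
qed

end

theorem corollary10:
  fixes \<Lambda> :: "'l set" and X :: "'l \<Rightarrow> 'a topology" and H :: "'l \<Rightarrow> 'a foliage"
    and Y :: "'b topology"
  assumes "\<Lambda> \<noteq> {}" and "countable \<Lambda>"
    and "\<And>i. i \<in> \<Lambda> \<Longrightarrow> pi_tree (X i) (H i)"
    and "\<And>i. i \<in> \<Lambda> \<Longrightarrow> cofin_omega \<ggreater> Rise (H i) (X i)"
    and "has_pi_tree Y"
  shows "has_pi_tree (prod_topology Y (product_topology X \<Lambda>))"
proof -
  obtain \<psi> where \<psi>: "baire_coordinates Y \<psi>" "grows_into (coord_foliage \<psi> (topspace Y)) Y"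
    using assms(5) by (auto simp: has_pi_tree_def pi_tree_def baire_foliage_tree_iff_coordinates)
  have "\<forall>i\<in>\<Lambda>. \<exists>\<phi>. baire_coordinates (X i) \<phi> \<and> H i = coord_foliage \<phi> (topspace (X i))"
    using assms(3) by (simp add: pi_tree_def baire_foliage_tree_iff_coordinates)
  then obtain \<phi> where \<phi>: "\<And>i. i \<in> \<Lambda> \<Longrightarrow> baire_coordinates (X i) (\<phi> i)"
    "\<And>i. i \<in> \<Lambda> \<Longrightarrow> H i = coord_foliage (\<phi> i) (topspace (X i))"
    by metis
  interpret product_coordinates \<Lambda> "from_nat_into \<Lambda>" X \<phi> Y \<psi>
    using assms(1,2) \<psi>(1) \<phi>(1) by unfold_locales (simp_all add: range_from_nat_into)
  have "pi_tree Z (coord_foliage prod_coord (topspace Z))"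
    unfolding pi_tree_def baire_foliage_tree_iff_coordinates
    using baire_coordinates_prod_coord grows_into_prod_coord[OF \<psi>(2)] assms(3,4) \<phi>(2)
    by (auto simp: pi_tree_def)
  then show ?thesis
    unfolding has_pi_tree_def by blast
qed

end
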